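(* Let $G$ be a Polish group that is not locally compact. Then every compact subset of $G$ is right Haar null.
   Context: A Polish group is a topological group whose topology is separable and completely metrizable. A set $A\subseteq G$ is right Haar null if there are a Borel set $B\supseteq A$ and a Borel probability measure $\mu$ on $G$ such that $\mu(Bg)=0$ for every $g\in G$. *)

theory Defs
  imports "HOL-Probability.Probability_Measure" "HOL-Algebra.Coset"
begin

definition topological_group :: "('a, 'b) monoid_scheme \<Rightarrow> 'a topology \<Rightarrow> bool" where
  "topological_group G T \<longleftrightarrow>
     group G \<and> topspace T = carrier G \<and>
     continuous_map (prod_topology T T) T (\<lambda>(x, y). x \<otimes>\<^bsub>G\<^esub> y) \<and>
     continuous_map T T (\<lambda>x. inv\<^bsub>G\<^esub> x)"

definition Polish_group :: "('a, 'b) monoid_scheme \<Rightarrow> 'a topology \<Rightarrow> bool" where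
  "Polish_group G T \<longleftrightarrow>
     topological_group G T \<and> separable_space T \<and> completely_metrizable_space T"

definition borel_sets :: "'a topology \<Rightarrow> 'a set set" where
  "borel_sets T = sigma_sets (topspace T) {U. openin T U}"

definition right_Haar_null :: "('a, 'b) monoid_scheme \<Rightarrow> 'a topology \<Rightarrow> 'a set \<Rightarrow> bool" where
  "right_Haar_null G T A \<longleftrightarrow>
     (\<exists>B M. B \<in> borel_sets T \<and> A \<subseteq> B \<and>
        prob_space M \<and> space M = topspace T \<and> sets M = borel_sets T \<and>
        (\<forall>g \<in> carrier G. emeasure M (B #>\<^bsub>G\<^esub> g) = 0))"

end

(*
  Two points a, b of G lie in a common right translate K g iff b a\<inverse> lies in the compact set
  D = {k' k\<inverse> | k, k' \<in> K}. This relation is closed, and since G is not locally compact D has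
  empty interior, so every neighbourhood of a point c contains a point v not related to c.
  Splitting closed balls of a complete compatible metric accordingly gives a Cantor scheme, hence a
  Borel map f from the coin-tossing space 2^\<nat> into G such that distinct sequences are sent to
  points lying in no common right translate of K. Each K g then pulls back under f to at most one
  sequence, a null set, so the image of the coin-tossing measure under f witnesses that K is right
  Haar null.
*)

theory Submission
  imports Defs "HOL-Probability.Probability"
begin

abbreviation coin_space :: "(nat \<Rightarrow> bool) measure" where
  "coin_space \<equiv> PiM UNIV (\<lambda>_. measure_pmf (pmf_of_set UNIV))"

lemma prob_space_coin_space: "prob_space coin_space"
  by (rule prob_space_PiM) (simp add: prob_space_measure_pmf)

lemma space_coin_space [simp]: "space coin_space = UNIV"
  by (simp add: space_PiM)

lemma coin_space_cylinder_eq: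
  "{w'. \<forall>i<n. w' i = w i} =
     prod_emb UNIV (\<lambda>_. measure_pmf (pmf_of_set UNIV)) {..<n} (PiE {..<n} (\<lambda>i. {w i}))"
  by (auto simp: prod_emb_iff restrict_PiE_iff space_PiM)

lemma coin_space_cylinder_in_sets: "{w'. \<forall>i<n. w' i = w i} \<in> sets coin_space"
  unfolding coin_space_cylinder_eq by (rule sets_PiM_I) auto

lemma emeasure_coin_space_cylinder:
  "emeasure coin_space {w'. \<forall>i<n. w' i = w i} = ennreal ((1/2) ^ n)"
proof -
  have "emeasure coin_space {w'. \<forall>i<n. w' i = w i} =
      (\<Prod>i<n. emeasure (measure_pmf (pmf_of_set UNIV)) {w i})"
    unfolding coin_space_cylinder_eq by (rule emeasure_PiM_emb) (auto simp: prob_space_measure_pmf)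
  also have "\<dots> = ennreal (1/2) ^ n"
    by (simp add: emeasure_pmf_single)
  also have "\<dots> = ennreal ((1/2) ^ n)"
    by (rule ennreal_power) simp
  finally show ?thesis .
qed

lemma emeasure_coin_space_subsingleton:
  assumes "\<And>w w'. w \<in> S \<Longrightarrow> w' \<in> S \<Longrightarrow> w = w'"
  shows "emeasure coin_space S = 0"
proof (cases "S = {}")
  case False
  then obtain w where S: "S \<subseteq> {w'. \<forall>i<n. w' i = w i}" for n
    using assms by blast
  have small: "emeasure coin_space S \<le> ennreal e" if "e > 0" for e
  proof -
    obtain n where n: "(1/2::real) ^ n < e"
      using real_arch_pow_inv[OF \<open>e > 0\<close>, of "1/2"] by auto
    have "emeasure coin_space S \<le> emeasure coin_space {w'. \<forall>i<n. w' i = w i}"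
      by (rule emeasure_mono[OF S coin_space_cylinder_in_sets])
    also have "\<dots> \<le> ennreal e"
      using n by (simp add: emeasure_coin_space_cylinder ennreal_leI)
    finally show ?thesis .
  qed
  have "emeasure coin_space S \<le> 0"
    by (rule ennreal_le_epsilon) (simp add: small)
  then show ?thesis
    by simp
qed simp

primrec rev_prefix :: "(nat \<Rightarrow> 'a) \<Rightarrow> nat \<Rightarrow> 'a list" where
  "rev_prefix w 0 = []"
| "rev_prefix w (Suc n) = w n # rev_prefix w n"

lemma length_rev_prefix [simp]: "length (rev_prefix w n) = n"
  by (induction n) auto

lemma rev_prefix_eq_iff: "rev_prefix w n = rev_prefix w' n \<longleftrightarrow> (\<forall>i<n. w i = w' i)"
  by (induction n) (auto simp: less_Suc_eq)

lemma measurable_rev_prefix: "(\<lambda>w. rev_prefix w n) \<in> coin_space \<rightarrow>\<^sub>M count_space UNIV"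
proof (induction n)
  case (Suc n)
  have component: "(\<lambda>w. w n) \<in> coin_space \<rightarrow>\<^sub>M count_space UNIV"
    using measurable_component_singleton[of n UNIV "\<lambda>_. measure_pmf (pmf_of_set UNIV)"]
    by (simp cong: measurable_cong_sets)
  have "(\<lambda>w. (\<lambda>b w. b # rev_prefix w n) (w n) w) \<in> coin_space \<rightarrow>\<^sub>M count_space UNIV"
    by (rule measurable_compose_countable'[OF _ component])
      (use measurable_compose[OF Suc.IH, of "Cons _" "count_space UNIV"] in simp_all)
  then show ?case
    by simp
qed simp

definition borel_measure :: "'a topology \<Rightarrow> 'a measure" where
  "borel_measure T = sigma (topspace T) {U. openin T U}"

lemma space_borel_measure [simp]: "space (borel_measure T) = topspace T"
  unfolding borel_measure_def by (rule space_measure_of) (auto dest: openin_subset)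

lemma sets_borel_measure [simp]: "sets (borel_measure T) = borel_sets T"
  unfolding borel_measure_def borel_sets_def by (rule sets_measure_of) (auto dest: openin_subset)

lemma closedin_in_borel_sets:
  assumes "closedin T C"
  shows "C \<in> borel_sets T"
proof -
  have "topspace T - (topspace T - C) \<in> borel_sets T"
    unfolding borel_sets_def using assms by (intro sigma_sets.Compl sigma_sets.Basic) auto
  then show ?thesis
    using closedin_subset[OF assms] by (simp add: double_diff)
qed

lemma compactin_in_borel_sets: "Hausdorff_space T \<Longrightarrow> compactin T C \<Longrightarrow> C \<in> borel_sets T"
  by (intro closedin_in_borel_sets compactin_imp_closedin)

locale Cantor_scheme = Metric_space M d for M d +
  fixes R :: "'a \<Rightarrow> 'a \<Rightarrow> bool"
  assumes complete: "mcomplete"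
    and nonempty: "M \<noteq> {}"
    and related_sym: "R a b \<Longrightarrow> R b a"
    and closed_related: "closedin (prod_topology mtopology mtopology) {(a, b) \<in> M \<times> M. R a b}"
    and unrelated_point_near: "openin mtopology U \<Longrightarrow> c \<in> U \<Longrightarrow> \<exists>v\<in>U. \<not> R c v"
begin

abbreviation disc :: "'a \<times> real \<Rightarrow> 'a set" where
  "disc B \<equiv> mcball (fst B) (snd B)"

definition splits :: "'a \<times> real \<Rightarrow> ('a \<times> real) \<times> ('a \<times> real) \<Rightarrow> bool" where
  "splits B LR \<longleftrightarrow>
     (\<forall>D \<in> {fst LR, snd LR}. fst D \<in> M \<and> 0 < snd D \<and> snd D \<le> snd B / 2 \<and> disc D \<subseteq> disc B) \<and>
     (\<forall>a \<in> disc (fst LR). \<forall>b \<in> disc (snd LR). \<not> R a b)"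

lemma small_mcball_inside:
  assumes "openin mtopology U" "x \<in> U" "r > 0"
  obtains e where "0 < e" "e \<le> r" "mcball x e \<subseteq> U"
proof -
  obtain e where "e > 0" "mcball x e \<subseteq> U"
    using assms openin_mtopology_mcball by blast
  then show thesis
    using that[of "min e r"] assms(3) mcball_subset_concentric[of "min e r" e x] by auto
qed

lemma splits_exists:
  assumes c: "c \<in> M" and r: "r > 0"
  shows "\<exists>LR. splits (c, r) LR"
proof -
  obtain v where v: "v \<in> mball c r" "\<not> R c v"
    using unrelated_point_near[of "mball c r" c] c r by auto
  define W where "W = topspace (prod_topology mtopology mtopology) - {(a, b) \<in> M \<times> M. R a b}"
  have "openin (prod_topology mtopology mtopology) W"
    unfolding W_def by (rule openin_diff[OF openin_topspace closed_related])
  moreover have "(c, v) \<in> W"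
    unfolding W_def using c v by auto
  ultimately have "\<exists>U V. openin mtopology U \<and> openin mtopology V \<and> c \<in> U \<and> v \<in> V \<and> U \<times> V \<subseteq> W"
    by (rule openin_prod_topology_alt[THEN iffD1, rule_format])
  then obtain U V
    where UV: "openin mtopology U" "openin mtopology V" "c \<in> U" "v \<in> V" "U \<times> V \<subseteq> W"
    by blast
  obtain e where e: "0 < e" "e \<le> r/2" "mcball c e \<subseteq> U \<inter> mball c r"
    using small_mcball_inside[of "U \<inter> mball c r" c "r/2"] UV c r by auto
  obtain e' where e': "0 < e'" "e' \<le> r/2" "mcball v e' \<subseteq> V \<inter> mball c r"
    using small_mcball_inside[of "V \<inter> mball c r" v "r/2"] UV v r by auto
  have "\<not> R a b" if "a \<in> mcball c e" "b \<in> mcball v e'" for a b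
  proof -
    have "(a, b) \<in> U \<times> V"
      using that e(3) e'(3) by blast
    then show ?thesis
      using UV(5) unfolding W_def by auto
  qed
  moreover have "mcball c e \<subseteq> mcball c r" "mcball v e' \<subseteq> mcball c r"
    using e(3) e'(3) mball_subset_mcball by blast+
  ultimately have "splits (c, r) ((c, e), (v, e'))"
    unfolding splits_def using c v(1) e(1,2) e'(1,2) by auto
  then show ?thesis ..
qed

definition halves :: "'a \<times> real \<Rightarrow> ('a \<times> real) \<times> ('a \<times> real)" where
  "halves B = (SOME LR. splits B LR)"

fun node :: "bool list \<Rightarrow> 'a \<times> real" where
  "node [] = (SOME c. c \<in> M, 1)"
| "node (b # s) = (if b then snd else fst) (halves (node s))"

lemma splits_halves: "fst B \<in> M \<Longrightarrow> 0 < snd B \<Longrightarrow> splits B (halves B)"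
  unfolding halves_def using splits_exists[of "fst B" "snd B"] by (metis prod.collapse someI_ex)

lemma node_valid: "fst (node s) \<in> M \<and> 0 < snd (node s) \<and> snd (node s) \<le> (1/2) ^ length s"
proof (induction s)
  case Nil
  show ?case
    using nonempty by (simp add: some_in_eq)
next
  case (Cons b s)
  then show ?case
    using splits_halves[of "node s"] unfolding splits_def by (cases b) auto
qed

lemma splits_node: "splits (node s) (halves (node s))"
  using splits_halves node_valid by blast

lemma disc_node_Cons_subset: "disc (node (b # s)) \<subseteq> disc (node s)"
  using splits_node[of s] unfolding splits_def by (cases b) auto

lemma node_False_True_unrelated:
  "a \<in> disc (node (False # s)) \<Longrightarrow> b \<in> disc (node (True # s)) \<Longrightarrow> \<not> R a b"
  using splits_node[of s] unfolding splits_def by simp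

definition cantor_point :: "(nat \<Rightarrow> bool) \<Rightarrow> 'a" where
  "cantor_point w = (SOME x. x \<in> (\<Inter>n. disc (node (rev_prefix w n))))"

lemma cantor_point_in_disc: "cantor_point w \<in> disc (node (rev_prefix w n))"
proof -
  let ?C = "\<lambda>n. disc (node (rev_prefix w n))"
  have "closedin mtopology (?C n)" for n
    by simp
  moreover have "?C n \<noteq> {}" for n
    using node_valid[of "rev_prefix w n"] by (simp add: mcball_eq_empty)
  moreover have "decseq ?C"
    by (rule decseq_SucI) (simp add: disc_node_Cons_subset del: node.simps)
  moreover have "\<exists>n a. ?C n \<subseteq> mcball a e" if "e > 0" for e
  proof -
    obtain n where "(1/2::real) ^ n < e"
      using real_arch_pow_inv[OF \<open>e > 0\<close>, of "1/2"] by auto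
    then have "?C n \<subseteq> mcball (fst (node (rev_prefix w n))) e"
      using node_valid[of "rev_prefix w n"] by (intro mcball_subset_concentric) simp
    then show ?thesis
      by blast
  qed
  ultimately have "\<Inter> (range ?C) \<noteq> {}"
    using complete[unfolded mcomplete_nest, THEN spec[of _ ?C]] by blast
  then have "\<exists>x. x \<in> (\<Inter>n. ?C n)"
    by blast
  then show ?thesis
    unfolding cantor_point_def by (rule someI2_ex) blast
qed

lemma cantor_point_in_M: "cantor_point w \<in> M"
  using cantor_point_in_disc[of w 0] by auto

lemma cantor_point_preimage_openin:
  assumes U: "openin mtopology U"
  shows "{w. cantor_point w \<in> U} = (\<Union>n. {w. disc (node (rev_prefix w n)) \<subseteq> U})"
proof (intro equalityI subsetI)
  fix w
  assume "w \<in> {w. cantor_point w \<in> U}"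
  then obtain e where e: "e > 0" "mball (cantor_point w) e \<subseteq> U"
    using U openin_mtopology by auto
  obtain n where n: "(1/2::real) ^ n < e/2"
    using real_arch_pow_inv[of "e/2" "1/2"] e by auto
  let ?c = "fst (node (rev_prefix w n))" and ?r = "snd (node (rev_prefix w n))"
  have c: "?c \<in> M" "d (cantor_point w) ?c \<le> ?r" and "?r < e/2"
    using cantor_point_in_disc[of w n] node_valid[of "rev_prefix w n"] n by (auto simp: commute)
  have "disc (node (rev_prefix w n)) \<subseteq> mball (cantor_point w) e"
  proof
    fix y
    assume "y \<in> disc (node (rev_prefix w n))"
    then have y: "y \<in> M" "d ?c y \<le> ?r"
      by auto
    then have "d (cantor_point w) y < e"
      using triangle[OF cantor_point_in_M[of w] c(1) y(1)] c(2) \<open>?r < e/2\<close> by linarith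
    then show "y \<in> mball (cantor_point w) e"
      using cantor_point_in_M y(1) by simp
  qed
  then show "w \<in> (\<Union>n. {w. disc (node (rev_prefix w n)) \<subseteq> U})"
    using e by blast
qed (use cantor_point_in_disc in blast)

lemma measurable_cantor_point: "cantor_point \<in> coin_space \<rightarrow>\<^sub>M borel_measure mtopology"
  unfolding borel_measure_def topspace_mtopology
proof (rule measurable_measure_of)
  fix U
  assume "U \<in> {U. openin mtopology U}"
  then have "cantor_point -` U \<inter> space coin_space =
      (\<Union>n. (\<lambda>w. rev_prefix w n) -` {s. disc (node s) \<subseteq> U} \<inter> space coin_space)"
    using cantor_point_preimage_openin[of U] by (simp add: set_eq_iff)
  also have "\<dots> \<in> sets coin_space"
    using measurable_sets[OF measurable_rev_prefix, of "{s. disc (node s) \<subseteq> U}"]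
    by (intro sets.countable_UN) auto
  finally show "cantor_point -` U \<inter> space coin_space \<in> sets coin_space" .
qed (use cantor_point_in_M openin_mtopology in auto)

lemma cantor_point_unrelated:
  assumes "w \<noteq> w'"
  shows "\<not> R (cantor_point w) (cantor_point w')"
proof -
  define n where "n = (LEAST i. w i \<noteq> w' i)"
  have "\<exists>i. w i \<noteq> w' i"
    using assms by auto
  then have "w n \<noteq> w' n"
    unfolding n_def by (rule LeastI_ex)
  then have w'n: "w' n = (\<not> w n)"
    by blast
  have "\<forall>i<n. w' i = w i"
    unfolding n_def using not_less_Least by force
  then have "rev_prefix w' n = rev_prefix w n"
    by (simp add: rev_prefix_eq_iff)
  then have w: "cantor_point w \<in> disc (node (w n # rev_prefix w n))"
    and w': "cantor_point w' \<in> disc (node ((\<not> w n) # rev_prefix w n))"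
    using cantor_point_in_disc[of w "Suc n"] cantor_point_in_disc[of w' "Suc n"] w'n
    by (simp_all del: node.simps)
  show ?thesis
  proof (cases "w n")
    case True
    then have "\<not> R (cantor_point w') (cantor_point w)"
      using node_False_True_unrelated w w' by simp
    then show ?thesis
      using related_sym[of "cantor_point w" "cantor_point w'"] by blast
  next
    case False
    then show ?thesis
      using node_False_True_unrelated w w' by simp
  qed
qed

end

definition in_common_r_coset :: "('a, 'b) monoid_scheme \<Rightarrow> 'a set \<Rightarrow> 'a \<Rightarrow> 'a \<Rightarrow> bool" where
  "in_common_r_coset G K a b \<longleftrightarrow> (\<exists>g \<in> carrier G. a \<in> K #>\<^bsub>G\<^esub> g \<and> b \<in> K #>\<^bsub>G\<^esub> g)"

lemma (in group) in_common_r_coset_iff: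
  assumes K: "K \<subseteq> carrier G" and a: "a \<in> carrier G" and b: "b \<in> carrier G"
  shows "in_common_r_coset G K a b \<longleftrightarrow> b \<otimes> inv a \<in> (\<lambda>(k, k'). k' \<otimes> inv k) ` (K \<times> K)"
proof
  assume "in_common_r_coset G K a b"
  then obtain g k k' where "g \<in> carrier G" "k \<in> K" "k' \<in> K" "a = k \<otimes> g" "b = k' \<otimes> g"
    unfolding in_common_r_coset_def r_coset_def by auto
  moreover from this have "b \<otimes> inv a = k' \<otimes> inv k"
    using K by (simp add: inv_mult_group m_assoc subsetD) (simp add: m_assoc[symmetric] subsetD)
  ultimately show "b \<otimes> inv a \<in> (\<lambda>(k, k'). k' \<otimes> inv k) ` (K \<times> K)"
    by force
next
  assume "b \<otimes> inv a \<in> (\<lambda>(k, k'). k' \<otimes> inv k) ` (K \<times> K)"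
  then obtain k k' where k: "k \<in> K" "k' \<in> K" and ba: "b \<otimes> inv a = k' \<otimes> inv k"
    by auto
  have kG: "k \<in> carrier G" "k' \<in> carrier G"
    using k K by auto
  have "a = k \<otimes> (inv k \<otimes> a)"
    using kG a by (simp add: m_assoc[symmetric])
  moreover have "b = k' \<otimes> (inv k \<otimes> a)"
    using ba kG a b by (metis inv_closed m_assoc m_closed inv_solve_right)
  ultimately show "in_common_r_coset G K a b"
    unfolding in_common_r_coset_def r_coset_def using k kG a by blast
qed

context
  fixes G :: "('a, 'b) monoid_scheme" (structure) and T :: "'a topology"
  assumes topological_group: "topological_group G T"
begin

interpretation group G
  using topological_group by (simp add: topological_group_def)

lemma continuous_map_mult: "continuous_map (prod_topology T T) T (\<lambda>(x, y). x \<otimes> y)"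
  using topological_group by (simp add: topological_group_def)

lemma topspace_topological_group [simp]: "topspace T = carrier G"
  using topological_group by (simp add: topological_group_def)

lemma continuous_map_mult_right:
  assumes "a \<in> carrier G"
  shows "continuous_map T T (\<lambda>x. x \<otimes> a)"
proof -
  have "continuous_map T (prod_topology T T) (\<lambda>x. (x, a))"
    using assms by (simp add: continuous_map_paired)
  from continuous_map_compose[OF this continuous_map_mult] show ?thesis
    by (simp add: o_def)
qed

lemma continuous_map_div_right: "continuous_map (prod_topology T T) T (\<lambda>(a, b). b \<otimes> inv a)"
proof -
  have "continuous_map T T (\<lambda>x. inv x)"
    using topological_group by (simp add: topological_group_def)
  then have "continuous_map (prod_topology T T) T (\<lambda>p. inv (fst p))"
    using continuous_map_compose[OF continuous_map_fst] by (auto simp: o_def)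
  then have "continuous_map (prod_topology T T) (prod_topology T T) (\<lambda>p. (snd p, inv (fst p)))"
    by (simp add: continuous_map_paired continuous_map_snd)
  from continuous_map_compose[OF this continuous_map_mult] show ?thesis
    by (simp add: o_def case_prod_unfold)
qed

lemma r_coset_eq_image: "K #> g = (\<lambda>x. x \<otimes> g) ` K"
  unfolding r_coset_def by auto

lemma compactin_r_coset: "compactin T K \<Longrightarrow> g \<in> carrier G \<Longrightarrow> compactin T (K #> g)"
  unfolding r_coset_eq_image by (rule image_compactin[OF _ continuous_map_mult_right])

lemma openin_r_coset:
  assumes U: "openin T U" and g: "g \<in> carrier G"
  shows "openin T (U #> g)"
proof -
  have "U #> g = {x \<in> topspace T. x \<otimes> inv g \<in> U}"
    using openin_subset[OF U] g unfolding r_coset_def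
    by (auto simp: m_assoc)
  then show ?thesis
    using openin_continuous_map_preimage[OF continuous_map_mult_right U] g by simp
qed

lemma locally_compact_if_compact_neighbourhood:
  assumes C: "compactin T C" and U: "openin T U" "x \<in> U" "U \<subseteq> C"
  shows "locally_compact_space T"
  unfolding locally_compact_space_def
proof
  fix y
  assume y: "y \<in> topspace T"
  have x: "x \<in> carrier G"
    using openin_subset[OF U(1)] U(2) by auto
  define h where "h = inv x \<otimes> y"
  have h: "h \<in> carrier G"
    using x y by (simp add: h_def)
  have "y \<in> U #> h"
    using U(2) x y unfolding r_coset_def h_def by (force simp: m_assoc[symmetric])
  moreover have "U #> h \<subseteq> C #> h"
    using U(3) unfolding r_coset_def by auto
  ultimately show "\<exists>V K. openin T V \<and> compactin T K \<and> y \<in> V \<and> V \<subseteq> K"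
    using openin_r_coset[OF U(1) h] compactin_r_coset[OF C h] by blast
qed

lemma exists_div_right_outside_compact:
  assumes "\<not> locally_compact_space T" and C: "compactin T C" and U: "openin T U" "c \<in> U"
  shows "\<exists>v\<in>U. v \<otimes> inv c \<notin> C"
proof (rule ccontr)
  assume contra: "\<not> ?thesis"
  have c: "c \<in> carrier G"
    using openin_subset[OF U(1)] U(2) by auto
  have "U \<subseteq> C #> c"
  proof
    fix v
    assume v: "v \<in> U"
    then have "v \<in> carrier G"
      using openin_subset[OF U(1)] by auto
    then have "v = (v \<otimes> inv c) \<otimes> c"
      using c by (simp add: m_assoc)
    then show "v \<in> C #> c"
      using v contra unfolding r_coset_eq_image by blast
  qed
  then show False
    using assms locally_compact_if_compact_neighbourhood[OF compactin_r_coset[OF C c] U] by blast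
qed

lemma closedin_in_common_r_coset:
  assumes "Hausdorff_space T" and K: "compactin T K"
  shows "closedin (prod_topology T T) {(a, b) \<in> topspace T \<times> topspace T. in_common_r_coset G K a b}"
proof -
  let ?D = "(\<lambda>(k, k'). k' \<otimes> inv k) ` (K \<times> K)"
  have "compactin T ?D"
    using K by (intro image_compactin[OF _ continuous_map_div_right]) (simp add: compactin_Times)
  then have "closedin T ?D"
    using assms(1) by (rule compactin_imp_closedin[rotated])
  moreover have "in_common_r_coset G K a b \<longleftrightarrow> b \<otimes> inv a \<in> ?D"
    if "a \<in> carrier G" "b \<in> carrier G" for a b
    using in_common_r_coset_iff compactin_subset_topspace[OF K] that by simp
  then have "{(a, b) \<in> topspace T \<times> topspace T. in_common_r_coset G K a b} =
      {p \<in> topspace (prod_topology T T). (\<lambda>(a, b). b \<otimes> inv a) p \<in> ?D}"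
    by auto
  ultimately show ?thesis
    using closedin_continuous_map_preimage[OF continuous_map_div_right] by simp
qed

lemma exists_not_in_common_r_coset:
  assumes "\<not> locally_compact_space T" and K: "compactin T K" and U: "openin T U" "c \<in> U"
  shows "\<exists>v\<in>U. \<not> in_common_r_coset G K c v"
proof -
  have "compactin T ((\<lambda>(k, k'). k' \<otimes> inv k) ` (K \<times> K))"
    using K by (intro image_compactin[OF _ continuous_map_div_right]) (simp add: compactin_Times)
  then obtain v where "v \<in> U" "v \<otimes> inv c \<notin> (\<lambda>(k, k'). k' \<otimes> inv k) ` (K \<times> K)"
    using exists_div_right_outside_compact assms by blast
  moreover have "v \<in> carrier G" "c \<in> carrier G"
    using openin_subset[OF U(1)] U(2) \<open>v \<in> U\<close> by auto
  ultimately have "\<not> in_common_r_coset G K c v"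
    using in_common_r_coset_iff compactin_subset_topspace[OF K] by simp
  then show ?thesis
    using \<open>v \<in> U\<close> by blast
qed

end

lemma Cantor_scheme_in_common_r_coset:
  assumes "Metric_space M d" "Metric_space.mcomplete M d"
    and G: "topological_group G (Metric_space.mtopology M d)"
    and "\<not> locally_compact_space (Metric_space.mtopology M d)"
    and K: "compactin (Metric_space.mtopology M d) K"
  shows "Cantor_scheme M d (in_common_r_coset G K)"
proof -
  interpret Metric_space M d
    by fact
  have M: "M = carrier G"
    using G by (simp add: topological_group_def)
  show ?thesis
  proof unfold_locales
    show "mcomplete"
      by fact
    show "M \<noteq> {}"
      using G M unfolding topological_group_def by (blast intro: monoid.one_closed group.is_monoid)
    show "in_common_r_coset G K b a" if "in_common_r_coset G K a b" for a b
      using that unfolding in_common_r_coset_def by blast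
    show "closedin (prod_topology mtopology mtopology) {(a, b) \<in> M \<times> M. in_common_r_coset G K a b}"
      using closedin_in_common_r_coset[OF G Hausdorff_space_mtopology K] by simp
    show "\<exists>v\<in>U. \<not> in_common_r_coset G K c v" if "openin mtopology U" "c \<in> U" for U c
      using exists_not_in_common_r_coset[OF G assms(4) K that] .
  qed
qed

lemma right_Haar_null_if_separating_map:
  assumes f: "f \<in> coin_space \<rightarrow>\<^sub>M borel_measure T"
    and K: "K \<in> borel_sets T" "\<And>g. g \<in> carrier G \<Longrightarrow> K #>\<^bsub>G\<^esub> g \<in> borel_sets T"
    and separating: "\<And>g w w'. g \<in> carrier G \<Longrightarrow> f w \<in> K #>\<^bsub>G\<^esub> g \<Longrightarrow> f w' \<in> K #>\<^bsub>G\<^esub> g \<Longrightarrow> w = w'"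
  shows "right_Haar_null G T K"
  unfolding right_Haar_null_def
proof (intro exI conjI ballI)
  show "prob_space (distr coin_space (borel_measure T) f)"
    by (rule prob_space.prob_space_distr[OF prob_space_coin_space f])
  fix g
  assume "g \<in> carrier G"
  then have "emeasure (distr coin_space (borel_measure T) f) (K #>\<^bsub>G\<^esub> g) =
      emeasure coin_space (f -` (K #>\<^bsub>G\<^esub> g))"
    using K by (simp add: emeasure_distr[OF f])
  also have "\<dots> = 0"
    using separating[OF \<open>g \<in> carrier G\<close>] by (intro emeasure_coin_space_subsingleton) blast
  finally show "emeasure (distr coin_space (borel_measure T) f) (K #>\<^bsub>G\<^esub> g) = 0" .
qed (use K in simp_all)

theorem proposition6p7:
  fixes G :: "('a, 'b) monoid_scheme" and T :: "'a topology" and K :: "'a set"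
  assumes "Polish_group G T"
    and "\<not> locally_compact_space T"
    and "compactin T K"
  shows "right_Haar_null G T K"
proof -
  have G: "topological_group G T"
    using assms(1) by (simp add: Polish_group_def)
  obtain M d where "Metric_space M d" "Metric_space.mcomplete M d"
    and T: "T = Metric_space.mtopology M d"
    using assms(1) unfolding Polish_group_def completely_metrizable_space_def by blast
  then interpret Cantor_scheme M d "in_common_r_coset G K"
    using Cantor_scheme_in_common_r_coset G assms(2,3) by simp
  have "Hausdorff_space T"
    using T Hausdorff_space_mtopology by simp
  then show ?thesis
    using measurable_cantor_point cantor_point_unrelated compactin_r_coset[OF G assms(3)] assms(3) T
    by (intro right_Haar_null_if_separating_map)
      (auto simp: in_common_r_coset_def intro: compactin_in_borel_sets)
qed

end
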